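(* There exists $n \geq 1$ such that the set of PC prographs of size $n$, ordered by $P \leq Q$ if $Q$ can be obtained from $P$ by a finite (possibly empty) sequence of the four rotations, is a poset that is not a lattice.
   Context: A PC prograph of size $n$ is a finite connected directed acyclic graph embedded in the plane (up to isotopy), drawn so that all edges go upward, whose $2n$ vertices are $n$ coproducts (one incoming edge, two outgoing edges distinguished as left and right) and $n$ products (two incoming edges distinguished as left and right, one outgoing edge); exactly one coproduct has its incoming slot unconnected (global input, at the bottom) and exactly one product has its outgoing slot unconnected (global output, at the top); all other slots are joined by edges. The four rotations are local rewritings of a configuration of two adjacent operators; in each, the boundary edges of the configuration, ordered left to right among inputs and among outputs, are reattached in the same order. Writing $\mu$ for a product, $\Delta$ for a coproduct, and composing configurations from bottom to top as in string diagrams: (1) $(\mathrm{id}\otimes\Delta)\circ\Delta \to (\Delta\otimes\mathrm{id})\circ\Delta$ (a coproduct on the right output of a coproduct becomes a coproduct on the left output of a coproduct); (2) $\mu\circ(\mu\otimes\mathrm{id}) \to \mu\circ(\mathrm{id}\otimes\mu)$; (3) $(\mu\otimes\mathrm{id})\circ(\mathrm{id}\otimes\Delta) \to \Delta\circ\mu$ (a coproduct whose left output enters the right input of a product, with two inputs and two outputs, becomes a product whose output enters a coproduct); (4) $\Delta\circ\mu \to (\mathrm{id}\otimes\mu)\circ(\Delta\otimes\mathrm{id})$ (a product whose output enters a coproduct becomes a coproduct whose right output enters the left input of a product). *)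

theory Defs
  imports "HOL-Algebra.Lattice"
begin

text \<open>PC prographs as planar string diagrams (morphisms 1 -> 1 of the free PRO
generated by a product Mu : 2 -> 1 and a coproduct De : 1 -> 2), modulo planar isotopy.
A diagram is a word of elementary layers, read from bottom to top; a layer (g, i)
applies generator g to the wires i, i+1, ... (wires numbered from 0, left to right),
all other wires passing through.  Planar isotopy of such diagrams is the equivalence
generated by interchanging two consecutive layers acting on disjoint sets of wires.\<close>

datatype gen = Mu | De

fun ins :: "gen \<Rightarrow> nat" where
  "ins Mu = 2" | "ins De = 1"

fun outs :: "gen \<Rightarrow> nat" where
  "outs Mu = 1" | "outs De = 2"

type_synonym layer = "gen \<times> nat"
type_synonym diagram = "layer list"

fun valid :: "diagram \<Rightarrow> nat \<Rightarrow> bool" where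
  "valid [] k = True"
| "valid ((g, i) # w) k = (i + ins g \<le> k \<and> valid w (k - ins g + outs g))"

fun nout :: "diagram \<Rightarrow> nat \<Rightarrow> nat" where
  "nout [] k = k"
| "nout ((g, i) # w) k = nout w (k - ins g + outs g)"

definition count_gen :: "gen \<Rightarrow> diagram \<Rightarrow> nat" where
  "count_gen g w = length (filter (\<lambda>l. fst l = g) w)"

definition prograph_word :: "nat \<Rightarrow> diagram \<Rightarrow> bool" where
  "prograph_word n w \<longleftrightarrow> valid w 1 \<and> nout w 1 = 1
     \<and> count_gen Mu w = n \<and> count_gen De w = n"

inductive interchange :: "diagram \<Rightarrow> diagram \<Rightarrow> bool" where
  "j \<ge> i + outs g1 \<Longrightarrow>
   interchange (u @ [(g1, i), (g2, j)] @ v) (u @ [(g2, j - outs g1 + ins g1), (g1, i)] @ v)"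

definition isotopic :: "diagram \<Rightarrow> diagram \<Rightarrow> bool" where
  "isotopic = (sup interchange (interchange\<inverse>\<inverse>))\<^sup>*\<^sup>*"

inductive rotation_rule :: "diagram \<Rightarrow> diagram \<Rightarrow> bool" where
  rot1: "rotation_rule [(De, k), (De, Suc k)] [(De, k), (De, k)]"
| rot2: "rotation_rule [(Mu, k), (Mu, k)] [(Mu, Suc k), (Mu, k)]"
| rot3: "rotation_rule [(De, Suc k), (Mu, k)] [(Mu, k), (De, k)]"
| rot4: "rotation_rule [(Mu, k), (De, k)] [(De, k), (Mu, Suc k)]"

inductive rotation :: "diagram \<Rightarrow> diagram \<Rightarrow> bool" where
  "rotation_rule l r \<Longrightarrow> rotation (u @ l @ v) (u @ r @ v)"

definition reaches :: "diagram \<Rightarrow> diagram \<Rightarrow> bool" where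
  "reaches = (sup isotopic rotation)\<^sup>*\<^sup>*"

definition iso_class :: "diagram \<Rightarrow> diagram set" where
  "iso_class w = {v. isotopic w v}"

definition pc_prographs :: "nat \<Rightarrow> diagram set set" where
  "pc_prographs n = iso_class ` {w. prograph_word n w}"

definition rot_le :: "diagram set \<Rightarrow> diagram set \<Rightarrow> bool" where
  "rot_le P Q \<longleftrightarrow> (\<exists>p\<in>P. \<exists>q\<in>Q. reaches p q)"

definition rotation_order :: "nat \<Rightarrow> diagram set gorder" where
  "rotation_order n = \<lparr>carrier = pc_prographs n, eq = (=), le = rot_le\<rparr>"

end

theory Submission
  imports Defs
begin

text \<open>For a fixed size only finitely many layer words occur, so the rotation order can be
decided by finite computation on words.  At size 3,
antisymmetry follows from a potential on words that is invariant under interchanges and strictly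
increases along rotations.  The order is not a lattice: two prographs \<open>lower1\<close> and
\<open>lower2\<close> have two common upper bounds \<open>upper1\<close> and \<open>upper2\<close>, but
no prograph lies above both lower ones and below both upper ones, so \<open>lower1\<close> and
\<open>lower2\<close> have no join.  This is certified by move-closed lists of words whose
intersection is empty.\<close>

section \<open>Closure and potential arguments for relations\<close>

lemma rtranclp_sup_rtranclp_left: "(sup R\<^sup>*\<^sup>* S)\<^sup>*\<^sup>* = (sup R S)\<^sup>*\<^sup>*"
proof (rule antisym)
  have "(sup R\<^sup>*\<^sup>* S)\<^sup>*\<^sup>* \<le> (sup R\<^sup>*\<^sup>* S\<^sup>*\<^sup>*)\<^sup>*\<^sup>*" by (rule rtranclp_mono) auto
  then show "(sup R\<^sup>*\<^sup>* S)\<^sup>*\<^sup>* \<le> (sup R S)\<^sup>*\<^sup>*" by (simp only: rtranclp_sup_rtranclp)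
  show "(sup R S)\<^sup>*\<^sup>* \<le> (sup R\<^sup>*\<^sup>* S)\<^sup>*\<^sup>*" by (rule rtranclp_mono) auto
qed

lemma rtranclp_closed:
  assumes "\<And>x y. x \<in> A \<Longrightarrow> r x y \<Longrightarrow> y \<in> A" and "r\<^sup>*\<^sup>* x y" and "x \<in> A"
  shows "y \<in> A"
  using assms(2,3) by induction (auto intro: assms(1))

lemma converse_rtranclp_closed:
  assumes "\<And>x y. y \<in> A \<Longrightarrow> r x y \<Longrightarrow> x \<in> A" and "r\<^sup>*\<^sup>* x y" and "y \<in> A"
  shows "x \<in> A"
  using assms(2,3) by (induction rule: converse_rtranclp_induct) (auto intro: assms(1))

lemma rtranclp_sup_potential:
  fixes \<phi> :: "'a \<Rightarrow> 'b::order"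
  assumes closed: "\<And>x y. x \<in> S \<Longrightarrow> sup E R x y \<Longrightarrow> y \<in> S"
    and E_invariant: "\<And>x y. x \<in> S \<Longrightarrow> E x y \<Longrightarrow> \<phi> y = \<phi> x"
    and R_increasing: "\<And>x y. x \<in> S \<Longrightarrow> R x y \<Longrightarrow> \<phi> x < \<phi> y"
    and path: "(sup E R)\<^sup>*\<^sup>* x y" and "x \<in> S"
  shows "\<phi> x < \<phi> y \<or> (\<phi> x = \<phi> y \<and> E\<^sup>*\<^sup>* x y)"
  using path
proof induction
  case (step y z)
  have "y \<in> S" using closed step.hyps(1) \<open>x \<in> S\<close> by (rule rtranclp_closed)
  from step.hyps(2) consider "E y z" | "R y z" by auto
  then show ?case
  proof cases
    case 1
    then have "\<phi> z = \<phi> y" by (rule E_invariant[OF \<open>y \<in> S\<close>])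
    then show ?thesis using step.IH rtranclp.rtrancl_into_rtrancl[of E x y z, OF _ 1] by auto
  next
    case 2
    then have "\<phi> y < \<phi> z" by (rule R_increasing[OF \<open>y \<in> S\<close>])
    then show ?thesis using step.IH by (metis order.strict_trans)
  qed
qed simp

lemma rtranclp_sup_potential_antisym:
  fixes \<phi> :: "'a \<Rightarrow> 'b::order"
  assumes closed: "\<And>x y. x \<in> S \<Longrightarrow> sup E R x y \<Longrightarrow> y \<in> S"
    and E_invariant: "\<And>x y. x \<in> S \<Longrightarrow> E x y \<Longrightarrow> \<phi> y = \<phi> x"
    and R_increasing: "\<And>x y. x \<in> S \<Longrightarrow> R x y \<Longrightarrow> \<phi> x < \<phi> y"
    and "(sup E R)\<^sup>*\<^sup>* x y" "(sup E R)\<^sup>*\<^sup>* y x" and "x \<in> S"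
  shows "E\<^sup>*\<^sup>* x y"
proof -
  have "y \<in> S" using closed \<open>(sup E R)\<^sup>*\<^sup>* x y\<close> \<open>x \<in> S\<close> by (rule rtranclp_closed)
  have "\<phi> x < \<phi> y \<or> (\<phi> x = \<phi> y \<and> E\<^sup>*\<^sup>* x y)"
    using closed E_invariant R_increasing \<open>(sup E R)\<^sup>*\<^sup>* x y\<close> \<open>x \<in> S\<close>
    by (rule rtranclp_sup_potential)
  moreover have "\<phi> y < \<phi> x \<or> (\<phi> y = \<phi> x \<and> E\<^sup>*\<^sup>* y x)"
    using closed E_invariant R_increasing \<open>(sup E R)\<^sup>*\<^sup>* y x\<close> \<open>y \<in> S\<close>
    by (rule rtranclp_sup_potential)
  ultimately show ?thesis by auto
qed

lemma not_lattice_if_no_least_upper_bound: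
  assumes "a \<in> carrier L" "b \<in> carrier L"
    and "\<And>s. s \<in> Upper L {a, b} \<Longrightarrow> \<exists>u \<in> Upper L {a, b}. \<not> s \<sqsubseteq>\<^bsub>L\<^esub> u"
  shows "\<not> lattice L"
proof
  assume "lattice L"
  then interpret upper_semilattice L by (simp add: lattice_def)
  obtain s where "least L s (Upper L {a, b})"
    using sup_of_two_exists assms(1,2) by blast
  then have "s \<in> Upper L {a, b}" "\<forall>u \<in> Upper L {a, b}. s \<sqsubseteq>\<^bsub>L\<^esub> u"
    by (simp_all add: least_def)
  with assms(3) show False by blast
qed

fun pair_rewrites :: "('a \<Rightarrow> 'a \<Rightarrow> 'a list list) \<Rightarrow> 'a list \<Rightarrow> 'a list list" where
  "pair_rewrites f (a # b # v) = map (\<lambda>r. r @ v) (f a b) @ map (Cons a) (pair_rewrites f (b # v))"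
| "pair_rewrites f _ = []"

lemma ex_list_cases: "(\<exists>u. P u) \<longleftrightarrow> P [] \<or> (\<exists>c u. P (c # u))"
  by (metis list.exhaust)

lemma set_pair_rewrites:
  "z \<in> set (pair_rewrites f w) \<longleftrightarrow> (\<exists>u a b v r. w = u @ [a, b] @ v \<and> r \<in> set (f a b) \<and> z = u @ r @ v)"
proof (induction f w arbitrary: z rule: pair_rewrites.induct)
  case (1 f a b v)
  have "z \<in> set (pair_rewrites f (a # b # v)) \<longleftrightarrow>
      (\<exists>r \<in> set (f a b). z = r @ v) \<or> (\<exists>z'. z' \<in> set (pair_rewrites f (b # v)) \<and> z = a # z')"
    by auto
  also have "\<dots> \<longleftrightarrow> (\<exists>u a' b' v' r. a # b # v = u @ [a', b'] @ v' \<and> r \<in> set (f a' b') \<and> z = u @ r @ v')"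
    unfolding "1.IH" ex_list_cases[where P = "\<lambda>u. \<exists>a' b' v' r.
      a # b # v = u @ [a', b'] @ v' \<and> r \<in> set (f a' b') \<and> z = u @ r @ v'"]
    by simp blast
  finally show ?case .
qed (auto simp: Cons_eq_append_conv)

fun interchange_pair :: "layer \<Rightarrow> layer \<Rightarrow> diagram list" where
  "interchange_pair (g1, i) (g2, j) =
     (if i + outs g1 \<le> j then [[(g2, j - outs g1 + ins g1), (g1, i)]] else [])"

fun interchange_pair_inv :: "layer \<Rightarrow> layer \<Rightarrow> diagram list" where
  "interchange_pair_inv (g2, j) (g1, i) =
     (if i + ins g1 \<le> j then [[(g1, i), (g2, j - ins g1 + outs g1)]] else [])"

fun rotation_pair :: "layer \<Rightarrow> layer \<Rightarrow> diagram list" where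
  "rotation_pair (De, k) (De, k') = (if k' = Suc k then [[(De, k), (De, k)]] else [])"
| "rotation_pair (Mu, k) (Mu, k') = (if k' = k then [[(Mu, Suc k), (Mu, k)]] else [])"
| "rotation_pair (De, k') (Mu, k) = (if k' = Suc k then [[(Mu, k), (De, k)]] else [])"
| "rotation_pair (Mu, k) (De, k') = (if k' = k then [[(De, k), (Mu, Suc k)]] else [])"

fun rotation_pair_inv :: "layer \<Rightarrow> layer \<Rightarrow> diagram list" where
  "rotation_pair_inv (De, k) (De, k') = (if k' = k then [[(De, k), (De, Suc k)]] else [])"
| "rotation_pair_inv (Mu, k) (Mu, k') = (if k = Suc k' then [[(Mu, k'), (Mu, k')]] else [])"
| "rotation_pair_inv (Mu, k) (De, k') = (if k' = k then [[(De, Suc k), (Mu, k)]] else [])"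
| "rotation_pair_inv (De, k) (Mu, k') = (if k' = Suc k then [[(Mu, k), (De, k)]] else [])"

lemma interchange_iff_pair_rewrites: "interchange w z \<longleftrightarrow> z \<in> set (pair_rewrites interchange_pair w)"
  unfolding set_pair_rewrites interchange.simps by force

lemma interchange_iff_pair_rewrites_inv:
  "interchange z w \<longleftrightarrow> z \<in> set (pair_rewrites interchange_pair_inv w)"
  unfolding set_pair_rewrites interchange.simps by force

lemma rotation_rule_iff_rotation_pair:
  "rotation_rule l r \<longleftrightarrow> (\<exists>a b. l = [a, b] \<and> r \<in> set (rotation_pair a b))"
proof
  show "rotation_rule l r \<Longrightarrow> \<exists>a b. l = [a, b] \<and> r \<in> set (rotation_pair a b)"
    by (induction rule: rotation_rule.induct) auto
next
  assume "\<exists>a b. l = [a, b] \<and> r \<in> set (rotation_pair a b)"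
  then obtain g1 k1 g2 k2 where "l = [(g1, k1), (g2, k2)]" "r \<in> set (rotation_pair (g1, k1) (g2, k2))"
    by auto
  then show "rotation_rule l r"
    by (cases g1; cases g2) (auto split: if_splits intro: rotation_rule.intros)
qed

lemma rotation_rule_imp_rotation_pair_inv:
  "rotation_rule l r \<Longrightarrow> \<exists>a b. r = [a, b] \<and> l \<in> set (rotation_pair_inv a b)"
  by (induction rule: rotation_rule.induct) auto

lemma rotation_iff_pair_rewrites: "rotation w z \<longleftrightarrow> z \<in> set (pair_rewrites rotation_pair w)"
  unfolding set_pair_rewrites rotation.simps rotation_rule_iff_rotation_pair by blast

lemma rotation_imp_pair_rewrites_inv: "rotation w z \<Longrightarrow> w \<in> set (pair_rewrites rotation_pair_inv z)"
  unfolding set_pair_rewrites rotation.simps by (blast dest: rotation_rule_imp_rotation_pair_inv)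

definition isotopy_step :: "diagram \<Rightarrow> diagram \<Rightarrow> bool" where
  "isotopy_step = sup interchange interchange\<inverse>\<inverse>"

definition move :: "diagram \<Rightarrow> diagram \<Rightarrow> bool" where
  "move = sup isotopy_step rotation"

lemma isotopic_eq_rtranclp_isotopy_step: "isotopic = isotopy_step\<^sup>*\<^sup>*"
  by (simp add: isotopic_def isotopy_step_def)

lemma reaches_eq_rtranclp_move: "reaches = move\<^sup>*\<^sup>*"
  by (simp add: reaches_def move_def isotopic_eq_rtranclp_isotopy_step rtranclp_sup_rtranclp_left)

lemma isotopy_step_sym: "isotopy_step w z \<Longrightarrow> isotopy_step z w"
  by (auto simp: isotopy_step_def)

lemma isotopic_refl: "isotopic x x"
  by (simp add: isotopic_def)

lemma isotopic_trans: "isotopic x y \<Longrightarrow> isotopic y z \<Longrightarrow> isotopic x z"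
  unfolding isotopic_def by (rule rtranclp_trans)

lemma isotopic_sym: "isotopic x y \<Longrightarrow> isotopic y x"
proof -
  have "symp isotopy_step" by (auto intro: sympI isotopy_step_sym)
  then show "isotopic x y \<Longrightarrow> isotopic y x"
    unfolding isotopic_eq_rtranclp_isotopy_step by (auto dest: symp_rtranclp sympD)
qed

lemma isotopic_imp_reaches: "isotopic x y \<Longrightarrow> reaches x y"
  by (auto simp: reaches_def)

lemma reaches_trans: "reaches x y \<Longrightarrow> reaches y z \<Longrightarrow> reaches x z"
  unfolding reaches_def by (rule rtranclp_trans)

lemma iso_class_eqI: "isotopic x y \<Longrightarrow> iso_class x = iso_class y"
  unfolding iso_class_def by (blast intro: isotopic_trans isotopic_sym)

lemma rot_le_iso_class_iff: "rot_le (iso_class x) (iso_class y) \<longleftrightarrow> reaches x y"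
proof
  assume "rot_le (iso_class x) (iso_class y)"
  then obtain p q where "isotopic x p" "reaches p q" "isotopic y q"
    by (auto simp: rot_le_def iso_class_def)
  then show "reaches x y"
    by (meson isotopic_imp_reaches isotopic_sym reaches_trans)
qed (auto simp: rot_le_def iso_class_def intro: isotopic_refl)

lemma partial_order_rotation_order:
  assumes antisym: "\<And>p q. prograph_word n p \<Longrightarrow> reaches p q \<Longrightarrow> reaches q p \<Longrightarrow> isotopic p q"
  shows "partial_order (rotation_order n)"
proof -
  let ?L = "rotation_order n"
  have carrier: "carrier ?L = iso_class ` {w. prograph_word n w}"
    and le: "le ?L = rot_le" and eq: "eq ?L = (=)"
    by (simp_all add: rotation_order_def pc_prographs_def)
  have "rot_le P P" if "P \<in> carrier ?L" for P
    using that by (auto simp: carrier rot_le_iso_class_iff reaches_def)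
  moreover have "P = Q"
    if le: "rot_le P Q" "rot_le Q P" and mem: "P \<in> carrier ?L" "Q \<in> carrier ?L" for P Q
  proof -
    obtain p q where pq: "prograph_word n p" "P = iso_class p" "Q = iso_class q"
      using mem by (auto simp: carrier)
    with le have "isotopic p q" by (simp add: rot_le_iso_class_iff antisym)
    with pq show ?thesis by (simp add: iso_class_eqI)
  qed
  moreover have "rot_le P R" if "rot_le P Q" "rot_le Q R" "P \<in> carrier ?L" "Q \<in> carrier ?L"
    "R \<in> carrier ?L" for P Q R
    using that by (auto simp: carrier rot_le_iso_class_iff intro: reaches_trans)
  ultimately show ?thesis
    by unfold_locales (simp_all add: le eq)
qed

section \<open>Deciding reachability by computation\<close>

definition isotopy_neighbours :: "diagram \<Rightarrow> diagram list" where
  "isotopy_neighbours w = pair_rewrites interchange_pair w @ pair_rewrites interchange_pair_inv w"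

definition move_successors :: "diagram \<Rightarrow> diagram list" where
  "move_successors w = isotopy_neighbours w @ pair_rewrites rotation_pair w"

definition move_predecessors :: "diagram \<Rightarrow> diagram list" where
  "move_predecessors w = isotopy_neighbours w @ pair_rewrites rotation_pair_inv w"

lemma isotopy_step_iff_neighbour: "isotopy_step w z \<longleftrightarrow> z \<in> set (isotopy_neighbours w)"
  using interchange_iff_pair_rewrites[of w z] interchange_iff_pair_rewrites_inv[of z w]
  by (auto simp: isotopy_step_def isotopy_neighbours_def)

lemma move_iff_successor: "move w z \<longleftrightarrow> z \<in> set (move_successors w)"
  by (auto simp: move_def move_successors_def isotopy_step_iff_neighbour rotation_iff_pair_rewrites)

lemma move_imp_predecessor: "move w z \<Longrightarrow> w \<in> set (move_predecessors z)"
  using isotopy_step_sym[of w z] isotopy_step_iff_neighbour[of z w] rotation_imp_pair_rewrites_inv[of w z]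
  by (auto simp: move_def move_predecessors_def)

definition successor_closed :: "diagram list \<Rightarrow> bool" where
  "successor_closed X \<longleftrightarrow> (\<forall>w \<in> set X. set (move_successors w) \<subseteq> set X)"

definition predecessor_closed :: "diagram list \<Rightarrow> bool" where
  "predecessor_closed X \<longleftrightarrow> (\<forall>w \<in> set X. set (move_predecessors w) \<subseteq> set X)"

lemma successor_closed_reaches:
  assumes "successor_closed X" "p \<in> set X" "reaches p q"
  shows "q \<in> set X"
proof (rule rtranclp_closed[where r = move])
  show "move\<^sup>*\<^sup>* p q" using assms(3) by (simp add: reaches_eq_rtranclp_move)
  show "y \<in> set X" if "x \<in> set X" "move x y" for x y
    using assms(1) that by (auto simp: successor_closed_def move_iff_successor)
qed (rule assms(2))

lemma predecessor_closed_reaches: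
  assumes "predecessor_closed X" "q \<in> set X" "reaches p q"
  shows "p \<in> set X"
proof (rule converse_rtranclp_closed[where r = move])
  show "move\<^sup>*\<^sup>* p q" using assms(3) by (simp add: reaches_eq_rtranclp_move)
  show "x \<in> set X" if "y \<in> set X" "move x y" for x y
    using assms(1) that by (auto simp: predecessor_closed_def dest: move_imp_predecessor)
qed (rule assms(2))

fun move_path :: "diagram list \<Rightarrow> bool" where
  "move_path (x # y # ws) \<longleftrightarrow> y \<in> set (move_successors x) \<and> move_path (y # ws)"
| "move_path _ \<longleftrightarrow> True"

lemma move_path_reaches: "move_path (x # ws) \<Longrightarrow> reaches x (last (x # ws))"
proof (induction ws arbitrary: x)
  case (Cons y ws)
  then have "move x y" "move\<^sup>*\<^sup>* y (last (y # ws))"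
    by (simp_all add: move_iff_successor reaches_eq_rtranclp_move)
  then have "move\<^sup>*\<^sup>* x (last (y # ws))" by (rule converse_rtranclp_into_rtranclp)
  then show ?case by (simp add: reaches_eq_rtranclp_move)
next
  case Nil
  show ?case by (simp add: reaches_eq_rtranclp_move)
qed

definition is_rotation_potential :: "(diagram \<times> nat) list \<Rightarrow> bool" where
  "is_rotation_potential T \<longleftrightarrow> (\<forall>w \<in> set (map fst T).
     (\<forall>z \<in> set (isotopy_neighbours w). map_of T z = map_of T w) \<and>
     (\<forall>z \<in> set (pair_rewrites rotation_pair w).
        map_of T z \<noteq> None \<and> the (map_of T w) < the (map_of T z)))"

lemma reaches_antisym_if_rotation_potential:
  assumes T: "is_rotation_potential T" and "map_of T p \<noteq> None" "reaches p q" "reaches q p"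
  shows "isotopic p q"
proof -
  let ?S = "{w. map_of T w \<noteq> None}" and ?\<phi> = "\<lambda>w. the (map_of T w)"
  have T_at: "(\<forall>z \<in> set (isotopy_neighbours x). map_of T z = map_of T x) \<and>
     (\<forall>z \<in> set (pair_rewrites rotation_pair x). map_of T z \<noteq> None \<and> ?\<phi> x < ?\<phi> z)"
    if "x \<in> ?S" for x
  proof -
    have "x \<in> set (map fst T)" using that by (simp add: map_of_eq_None_iff)
    with T show ?thesis unfolding is_rotation_potential_def by (rule bspec)
  qed
  have isotopy_invariant: "map_of T y = map_of T x" if "x \<in> ?S" "isotopy_step x y" for x y
    using T_at[OF that(1)] that(2) by (simp add: isotopy_step_iff_neighbour)
  have rotation_increasing: "map_of T y \<noteq> None \<and> ?\<phi> x < ?\<phi> y" if "x \<in> ?S" "rotation x y" for x y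
    using T_at[OF that(1)] that(2) by (simp add: rotation_iff_pair_rewrites)
  show ?thesis
    unfolding isotopic_eq_rtranclp_isotopy_step
  proof (rule rtranclp_sup_potential_antisym[where S = ?S and \<phi> = ?\<phi> and E = isotopy_step and R = rotation])
    show "y \<in> ?S" if "x \<in> ?S" "sup isotopy_step rotation x y" for x y
    proof -
      from that(2) consider "isotopy_step x y" | "rotation x y" by auto
      then show ?thesis
        by cases (use isotopy_invariant[OF that(1)] rotation_increasing[OF that(1)] that(1) in auto)
    qed
    show "?\<phi> y = ?\<phi> x" if "x \<in> ?S" "isotopy_step x y" for x y
      using isotopy_invariant[OF that] by simp
    show "?\<phi> x < ?\<phi> y" if "x \<in> ?S" "rotation x y" for x y
      using rotation_increasing[OF that] by simp
    show "(sup isotopy_step rotation)\<^sup>*\<^sup>* p q" "(sup isotopy_step rotation)\<^sup>*\<^sup>* q p"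
      using assms(3,4) by (simp_all add: reaches_eq_rtranclp_move move_def)
  qed (use assms(2) in simp)
qed

fun valid_words :: "nat \<Rightarrow> nat \<Rightarrow> nat \<Rightarrow> diagram list" where
  "valid_words 0 m k = (if m = 0 then [[]] else [])"
| "valid_words (Suc n) m k =
     concat (map (\<lambda>i. map (Cons (De, i)) (valid_words n m (Suc k))) [0..<k]) @
     (if m > 0 then concat (map (\<lambda>i. map (Cons (Mu, i)) (valid_words n (m - 1) (k - 1))) [0..<k - 1])
      else [])"

lemma valid_in_valid_words: "valid w k \<Longrightarrow> w \<in> set (valid_words (length w) (count_gen Mu w) k)"
proof (induction w arbitrary: k)
  case Nil
  then show ?case by (simp add: count_gen_def)
next
  case (Cons l w)
  obtain g i where l: "l = (g, i)" by force
  show ?case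
  proof (cases g)
    case Mu
    with Cons.prems l have "i + 2 \<le> k" "valid w (Suc (k - 2))" by auto
    moreover from \<open>i + 2 \<le> k\<close> have "Suc (k - 2) = k - 1" by arith
    ultimately have "w \<in> set (valid_words (length w) (count_gen Mu w) (k - 1))"
      using Cons.IH by simp
    then have "(Mu, i) # w \<in> set (concat (map (\<lambda>i. map (Cons (Mu, i))
        (valid_words (length w) (count_gen Mu w) (k - 1))) [0..<k - 1]))"
      using \<open>i + 2 \<le> k\<close> by auto
    then show ?thesis by (simp add: l Mu count_gen_def)
  next
    case De
    with Cons.prems l have "i < k" "valid w (Suc k)" by auto
    then have "w \<in> set (valid_words (length w) (count_gen Mu w) (Suc k))"
      using Cons.IH by simp
    then have "(De, i) # w \<in> set (concat (map (\<lambda>i. map (Cons (De, i))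
        (valid_words (length w) (count_gen Mu w) (Suc k))) [0..<k]))"
      using \<open>i < k\<close> by auto
    then show ?thesis by (simp add: l De count_gen_def)
  qed
qed

lemma count_gen_Mu_De: "count_gen Mu w + count_gen De w = length w"
proof (induction w)
  case (Cons l w)
  then show ?case by (cases "fst l") (simp_all add: count_gen_def)
qed (simp add: count_gen_def)

lemma prograph_word_in_valid_words:
  "prograph_word n w \<Longrightarrow> w \<in> set (filter (\<lambda>w. nout w 1 = 1) (valid_words (2 * n) n 1))"
  using valid_in_valid_words[of w 1] count_gen_Mu_De[of w] by (simp add: prograph_word_def mult_2)

section \<open>Size three\<close>

text \<open>Any table satisfying \<^const>\<open>is_rotation_potential\<close> would do; the values carry no
further meaning.\<close>

definition potential_3 :: "(diagram \<times> nat) list" where "potential_3 = [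
  ([(De, 0), (De, 0), (De, 0), (Mu, 0), (Mu, 0), (Mu, 0)], 5),
  ([(De, 0), (De, 0), (De, 0), (Mu, 0), (Mu, 1), (Mu, 0)], 17),
  ([(De, 0), (De, 0), (De, 0), (Mu, 1), (Mu, 0), (Mu, 0)], 12),
  ([(De, 0), (De, 0), (De, 0), (Mu, 1), (Mu, 1), (Mu, 0)], 27),
  ([(De, 0), (De, 0), (De, 0), (Mu, 2), (Mu, 0), (Mu, 0)], 17),
  ([(De, 0), (De, 0), (De, 0), (Mu, 2), (Mu, 1), (Mu, 0)], 42),
  ([(De, 0), (De, 0), (De, 1), (Mu, 0), (Mu, 0), (Mu, 0)], 3),
  ([(De, 0), (De, 0), (De, 1), (Mu, 0), (Mu, 1), (Mu, 0)], 13),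
  ([(De, 0), (De, 0), (De, 1), (Mu, 1), (Mu, 0), (Mu, 0)], 6),
  ([(De, 0), (De, 0), (De, 1), (Mu, 1), (Mu, 1), (Mu, 0)], 9),
  ([(De, 0), (De, 0), (De, 1), (Mu, 2), (Mu, 0), (Mu, 0)], 13),
  ([(De, 0), (De, 0), (De, 1), (Mu, 2), (Mu, 1), (Mu, 0)], 27),
  ([(De, 0), (De, 0), (De, 2), (Mu, 0), (Mu, 0), (Mu, 0)], 2),
  ([(De, 0), (De, 0), (De, 2), (Mu, 0), (Mu, 1), (Mu, 0)], 4),
  ([(De, 0), (De, 0), (De, 2), (Mu, 1), (Mu, 0), (Mu, 0)], 6),
  ([(De, 0), (De, 0), (De, 2), (Mu, 1), (Mu, 1), (Mu, 0)], 13),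
  ([(De, 0), (De, 0), (De, 2), (Mu, 2), (Mu, 0), (Mu, 0)], 4),
  ([(De, 0), (De, 0), (De, 2), (Mu, 2), (Mu, 1), (Mu, 0)], 17),
  ([(De, 0), (De, 0), (Mu, 0), (De, 0), (Mu, 0), (Mu, 0)], 5),
  ([(De, 0), (De, 0), (Mu, 0), (De, 0), (Mu, 1), (Mu, 0)], 18),
  ([(De, 0), (De, 0), (Mu, 0), (De, 1), (Mu, 0), (Mu, 0)], 2),
  ([(De, 0), (De, 0), (Mu, 0), (De, 1), (Mu, 1), (Mu, 0)], 4),
  ([(De, 0), (De, 0), (Mu, 0), (Mu, 0), (De, 0), (Mu, 0)], 4),
  ([(De, 0), (De, 0), (Mu, 1), (De, 0), (Mu, 0), (Mu, 0)], 17),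
  ([(De, 0), (De, 0), (Mu, 1), (De, 0), (Mu, 1), (Mu, 0)], 42),
  ([(De, 0), (De, 0), (Mu, 1), (De, 1), (Mu, 0), (Mu, 0)], 9),
  ([(De, 0), (De, 0), (Mu, 1), (De, 1), (Mu, 1), (Mu, 0)], 18),
  ([(De, 0), (De, 0), (Mu, 1), (Mu, 0), (De, 0), (Mu, 0)], 14),
  ([(De, 0), (De, 1), (De, 0), (Mu, 0), (Mu, 0), (Mu, 0)], 2),
  ([(De, 0), (De, 1), (De, 0), (Mu, 0), (Mu, 1), (Mu, 0)], 4),
  ([(De, 0), (De, 1), (De, 0), (Mu, 1), (Mu, 0), (Mu, 0)], 6),
  ([(De, 0), (De, 1), (De, 0), (Mu, 1), (Mu, 1), (Mu, 0)], 13),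
  ([(De, 0), (De, 1), (De, 0), (Mu, 2), (Mu, 0), (Mu, 0)], 4),
  ([(De, 0), (De, 1), (De, 0), (Mu, 2), (Mu, 1), (Mu, 0)], 17),
  ([(De, 0), (De, 1), (De, 1), (Mu, 0), (Mu, 0), (Mu, 0)], 2),
  ([(De, 0), (De, 1), (De, 1), (Mu, 0), (Mu, 1), (Mu, 0)], 6),
  ([(De, 0), (De, 1), (De, 1), (Mu, 1), (Mu, 0), (Mu, 0)], 4),
  ([(De, 0), (De, 1), (De, 1), (Mu, 1), (Mu, 1), (Mu, 0)], 6),
  ([(De, 0), (De, 1), (De, 1), (Mu, 2), (Mu, 0), (Mu, 0)], 6),
  ([(De, 0), (De, 1), (De, 1), (Mu, 2), (Mu, 1), (Mu, 0)], 12),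
  ([(De, 0), (De, 1), (De, 2), (Mu, 0), (Mu, 0), (Mu, 0)], 1),
  ([(De, 0), (De, 1), (De, 2), (Mu, 0), (Mu, 1), (Mu, 0)], 2),
  ([(De, 0), (De, 1), (De, 2), (Mu, 1), (Mu, 0), (Mu, 0)], 2),
  ([(De, 0), (De, 1), (De, 2), (Mu, 1), (Mu, 1), (Mu, 0)], 3),
  ([(De, 0), (De, 1), (De, 2), (Mu, 2), (Mu, 0), (Mu, 0)], 2),
  ([(De, 0), (De, 1), (De, 2), (Mu, 2), (Mu, 1), (Mu, 0)], 5),
  ([(De, 0), (De, 1), (Mu, 0), (De, 0), (Mu, 0), (Mu, 0)], 3),
  ([(De, 0), (De, 1), (Mu, 0), (De, 0), (Mu, 1), (Mu, 0)], 9),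
  ([(De, 0), (De, 1), (Mu, 0), (De, 1), (Mu, 0), (Mu, 0)], 1),
  ([(De, 0), (De, 1), (Mu, 0), (De, 1), (Mu, 1), (Mu, 0)], 2),
  ([(De, 0), (De, 1), (Mu, 0), (Mu, 0), (De, 0), (Mu, 0)], 2),
  ([(De, 0), (De, 1), (Mu, 1), (De, 0), (Mu, 0), (Mu, 0)], 4),
  ([(De, 0), (De, 1), (Mu, 1), (De, 0), (Mu, 1), (Mu, 0)], 17),
  ([(De, 0), (De, 1), (Mu, 1), (De, 1), (Mu, 0), (Mu, 0)], 3),
  ([(De, 0), (De, 1), (Mu, 1), (De, 1), (Mu, 1), (Mu, 0)], 5),
  ([(De, 0), (De, 1), (Mu, 1), (Mu, 0), (De, 0), (Mu, 0)], 5),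
  ([(De, 0), (Mu, 0), (De, 0), (De, 0), (Mu, 0), (Mu, 0)], 5),
  ([(De, 0), (Mu, 0), (De, 0), (De, 0), (Mu, 1), (Mu, 0)], 14),
  ([(De, 0), (Mu, 0), (De, 0), (De, 1), (Mu, 0), (Mu, 0)], 2),
  ([(De, 0), (Mu, 0), (De, 0), (De, 1), (Mu, 1), (Mu, 0)], 4),
  ([(De, 0), (Mu, 0), (De, 0), (Mu, 0), (De, 0), (Mu, 0)], 4)]"

lemma is_rotation_potential_3: "is_rotation_potential potential_3"
  unfolding is_rotation_potential_def potential_3_def by code_simp

lemma prograph_word_3_in_potential_3: "prograph_word 3 w \<Longrightarrow> map_of potential_3 w \<noteq> None"
proof -
  have "\<forall>w \<in> set (filter (\<lambda>w. nout w 1 = 1) (valid_words (2 * 3) 3 1)). map_of potential_3 w \<noteq> None"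
    unfolding potential_3_def by code_simp
  moreover assume "prograph_word 3 w"
  ultimately show ?thesis using prograph_word_in_valid_words[of 3 w] by blast
qed

lemma reaches_antisym_3:
  "prograph_word 3 p \<Longrightarrow> reaches p q \<Longrightarrow> reaches q p \<Longrightarrow> isotopic p q"
  by (rule reaches_antisym_if_rotation_potential[OF is_rotation_potential_3 prograph_word_3_in_potential_3])

definition lower1 :: diagram where "lower1 = [(De, 0), (De, 0), (Mu, 0), (Mu, 0), (De, 0), (Mu, 0)]"

definition lower2 :: diagram where "lower2 = [(De, 0), (De, 0), (Mu, 1), (De, 1), (Mu, 0), (Mu, 0)]"

definition upper1 :: diagram where "upper1 = [(De, 0), (De, 0), (Mu, 0), (De, 0), (Mu, 1), (Mu, 0)]"

definition upper2 :: diagram where "upper2 = [(De, 0), (De, 0), (Mu, 1), (Mu, 0), (De, 0), (Mu, 0)]"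

lemma prograph_word_3_bounds:
  "prograph_word 3 lower1" "prograph_word 3 lower2" "prograph_word 3 upper1" "prograph_word 3 upper2"
  unfolding prograph_word_def lower1_def lower2_def upper1_def upper2_def count_gen_def by simp_all

lemma reaches_lower_upper:
  "reaches lower1 upper1" "reaches lower1 upper2" "reaches lower2 upper1" "reaches lower2 upper2"
proof -
  have "move_path [lower1, upper1]" "move_path [lower1, upper2]" "move_path [lower2, upper2]"
    and path_2_1: "move_path [lower2, [(De, 0), (De, 0), (De, 1), (Mu, 2), (Mu, 0), (Mu, 0)],
       [(De, 0), (De, 0), (De, 1), (Mu, 0), (Mu, 1), (Mu, 0)], upper1]"
    unfolding lower1_def lower2_def upper1_def upper2_def by code_simp+
  from this(1-3)[THEN move_path_reaches] move_path_reaches[OF path_2_1]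
  show "reaches lower1 upper1" "reaches lower1 upper2" "reaches lower2 upper1" "reaches lower2 upper2"
    by simp_all
qed

text \<open>Over-approximations of the words reachable from \<^const>\<open>lower1\<close>, \<^const>\<open>lower2\<close>
and of the words reaching \<^const>\<open>upper1\<close>, \<^const>\<open>upper2\<close>: only their closedness
is used.\<close>

definition above_lower1 :: "diagram list" where "above_lower1 = [
  [(De, 0), (De, 0), (De, 0), (Mu, 1), (Mu, 1), (Mu, 0)],
  [(De, 0), (De, 0), (De, 0), (Mu, 2), (Mu, 1), (Mu, 0)],
  [(De, 0), (De, 0), (Mu, 0), (De, 0), (Mu, 1), (Mu, 0)],
  [(De, 0), (De, 0), (Mu, 0), (Mu, 0), (De, 0), (Mu, 0)],
  [(De, 0), (De, 0), (Mu, 1), (De, 0), (Mu, 1), (Mu, 0)],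
  [(De, 0), (De, 0), (Mu, 1), (Mu, 0), (De, 0), (Mu, 0)]]"

definition above_lower2 :: "diagram list" where "above_lower2 = [
  [(De, 0), (De, 0), (De, 0), (Mu, 0), (Mu, 1), (Mu, 0)],
  [(De, 0), (De, 0), (De, 0), (Mu, 1), (Mu, 1), (Mu, 0)],
  [(De, 0), (De, 0), (De, 0), (Mu, 2), (Mu, 0), (Mu, 0)],
  [(De, 0), (De, 0), (De, 0), (Mu, 2), (Mu, 1), (Mu, 0)],
  [(De, 0), (De, 0), (De, 1), (Mu, 0), (Mu, 1), (Mu, 0)],
  [(De, 0), (De, 0), (De, 1), (Mu, 2), (Mu, 0), (Mu, 0)],
  [(De, 0), (De, 0), (De, 1), (Mu, 2), (Mu, 1), (Mu, 0)],
  [(De, 0), (De, 0), (Mu, 0), (De, 0), (Mu, 1), (Mu, 0)],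
  [(De, 0), (De, 0), (Mu, 1), (De, 0), (Mu, 0), (Mu, 0)],
  [(De, 0), (De, 0), (Mu, 1), (De, 0), (Mu, 1), (Mu, 0)],
  [(De, 0), (De, 0), (Mu, 1), (De, 1), (Mu, 0), (Mu, 0)],
  [(De, 0), (De, 0), (Mu, 1), (De, 1), (Mu, 1), (Mu, 0)],
  [(De, 0), (De, 0), (Mu, 1), (Mu, 0), (De, 0), (Mu, 0)]]"

definition below_upper1 :: "diagram list" where "below_upper1 = [
  [(De, 0), (De, 0), (De, 1), (Mu, 0), (Mu, 0), (Mu, 0)],
  [(De, 0), (De, 0), (De, 1), (Mu, 0), (Mu, 1), (Mu, 0)],
  [(De, 0), (De, 0), (De, 1), (Mu, 2), (Mu, 0), (Mu, 0)],
  [(De, 0), (De, 0), (De, 2), (Mu, 0), (Mu, 0), (Mu, 0)],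
  [(De, 0), (De, 0), (De, 2), (Mu, 1), (Mu, 0), (Mu, 0)],
  [(De, 0), (De, 0), (Mu, 0), (De, 0), (Mu, 0), (Mu, 0)],
  [(De, 0), (De, 0), (Mu, 0), (De, 0), (Mu, 1), (Mu, 0)],
  [(De, 0), (De, 0), (Mu, 0), (De, 1), (Mu, 0), (Mu, 0)],
  [(De, 0), (De, 0), (Mu, 0), (Mu, 0), (De, 0), (Mu, 0)],
  [(De, 0), (De, 0), (Mu, 1), (De, 1), (Mu, 0), (Mu, 0)],
  [(De, 0), (De, 1), (De, 0), (Mu, 0), (Mu, 0), (Mu, 0)],
  [(De, 0), (De, 1), (De, 0), (Mu, 1), (Mu, 0), (Mu, 0)],
  [(De, 0), (De, 1), (De, 1), (Mu, 0), (Mu, 0), (Mu, 0)],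
  [(De, 0), (De, 1), (De, 1), (Mu, 0), (Mu, 1), (Mu, 0)],
  [(De, 0), (De, 1), (De, 1), (Mu, 2), (Mu, 0), (Mu, 0)],
  [(De, 0), (De, 1), (De, 2), (Mu, 0), (Mu, 0), (Mu, 0)],
  [(De, 0), (De, 1), (De, 2), (Mu, 0), (Mu, 1), (Mu, 0)],
  [(De, 0), (De, 1), (De, 2), (Mu, 1), (Mu, 0), (Mu, 0)],
  [(De, 0), (De, 1), (De, 2), (Mu, 2), (Mu, 0), (Mu, 0)],
  [(De, 0), (De, 1), (Mu, 0), (De, 0), (Mu, 0), (Mu, 0)],
  [(De, 0), (De, 1), (Mu, 0), (De, 0), (Mu, 1), (Mu, 0)],
  [(De, 0), (De, 1), (Mu, 0), (De, 1), (Mu, 0), (Mu, 0)],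
  [(De, 0), (De, 1), (Mu, 0), (De, 1), (Mu, 1), (Mu, 0)],
  [(De, 0), (De, 1), (Mu, 0), (Mu, 0), (De, 0), (Mu, 0)],
  [(De, 0), (De, 1), (Mu, 1), (De, 1), (Mu, 0), (Mu, 0)],
  [(De, 0), (Mu, 0), (De, 0), (De, 1), (Mu, 0), (Mu, 0)]]"

definition below_upper2 :: "diagram list" where "below_upper2 = [
  [(De, 0), (De, 0), (De, 2), (Mu, 0), (Mu, 0), (Mu, 0)],
  [(De, 0), (De, 0), (De, 2), (Mu, 1), (Mu, 0), (Mu, 0)],
  [(De, 0), (De, 0), (Mu, 0), (De, 1), (Mu, 0), (Mu, 0)],
  [(De, 0), (De, 0), (Mu, 0), (Mu, 0), (De, 0), (Mu, 0)],
  [(De, 0), (De, 0), (Mu, 1), (De, 1), (Mu, 0), (Mu, 0)],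
  [(De, 0), (De, 0), (Mu, 1), (Mu, 0), (De, 0), (Mu, 0)],
  [(De, 0), (De, 1), (De, 0), (Mu, 0), (Mu, 0), (Mu, 0)],
  [(De, 0), (De, 1), (De, 0), (Mu, 1), (Mu, 0), (Mu, 0)],
  [(De, 0), (De, 1), (De, 1), (Mu, 0), (Mu, 0), (Mu, 0)],
  [(De, 0), (De, 1), (De, 2), (Mu, 0), (Mu, 0), (Mu, 0)],
  [(De, 0), (De, 1), (De, 2), (Mu, 1), (Mu, 0), (Mu, 0)],
  [(De, 0), (De, 1), (Mu, 0), (De, 0), (Mu, 0), (Mu, 0)],
  [(De, 0), (De, 1), (Mu, 0), (De, 1), (Mu, 0), (Mu, 0)],
  [(De, 0), (De, 1), (Mu, 0), (Mu, 0), (De, 0), (Mu, 0)],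
  [(De, 0), (De, 1), (Mu, 1), (De, 1), (Mu, 0), (Mu, 0)],
  [(De, 0), (De, 1), (Mu, 1), (Mu, 0), (De, 0), (Mu, 0)],
  [(De, 0), (Mu, 0), (De, 0), (De, 1), (Mu, 0), (Mu, 0)],
  [(De, 0), (Mu, 0), (De, 0), (Mu, 0), (De, 0), (Mu, 0)]]"

lemma no_bound_between_lower_and_upper:
  assumes "reaches lower1 w" "reaches lower2 w" "reaches w upper1" "reaches w upper2"
  shows False
proof -
  have "successor_closed above_lower1" "successor_closed above_lower2"
    "predecessor_closed below_upper1" "predecessor_closed below_upper2"
    unfolding above_lower1_def above_lower2_def below_upper1_def below_upper2_def
      successor_closed_def predecessor_closed_def by code_simp+
  moreover have "lower1 \<in> set above_lower1" "lower2 \<in> set above_lower2"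
    "upper1 \<in> set below_upper1" "upper2 \<in> set below_upper2"
    unfolding above_lower1_def above_lower2_def below_upper1_def below_upper2_def
      lower1_def lower2_def upper1_def upper2_def by simp_all
  ultimately have "w \<in> set above_lower1 \<inter> set above_lower2 \<inter> set below_upper1 \<inter> set below_upper2"
    using assms successor_closed_reaches predecessor_closed_reaches by blast
  moreover have "set above_lower1 \<inter> set above_lower2 \<inter> set below_upper1 \<inter> set below_upper2 = {}"
    unfolding above_lower1_def above_lower2_def below_upper1_def below_upper2_def by code_simp
  ultimately show False by blast
qed

lemma not_lattice_rotation_order_3: "\<not> lattice (rotation_order 3)"
proof -
  let ?L = "rotation_order 3"
  have in_carrier: "iso_class w \<in> carrier ?L" if "prograph_word 3 w" for w
    using that by (simp add: rotation_order_def pc_prographs_def)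
  have le: "le ?L = rot_le" by (simp add: rotation_order_def)
  let ?U = "Upper ?L {iso_class lower1, iso_class lower2}"
  have upper_bound: "iso_class u \<in> ?U" if "prograph_word 3 u" "reaches lower1 u" "reaches lower2 u" for u
    using that in_carrier unfolding Upper_def le by (auto simp: rot_le_iso_class_iff)
  show ?thesis
  proof (rule not_lattice_if_no_least_upper_bound)
    show "iso_class lower1 \<in> carrier ?L" "iso_class lower2 \<in> carrier ?L"
      using prograph_word_3_bounds by (simp_all add: in_carrier)
    fix S assume "S \<in> ?U"
    then have "S \<in> carrier ?L" "rot_le (iso_class lower1) S" "rot_le (iso_class lower2) S"
      using in_carrier prograph_word_3_bounds unfolding Upper_def le by auto
    then obtain w where w: "S = iso_class w" "reaches lower1 w" "reaches lower2 w"
      by (auto simp: rotation_order_def pc_prographs_def rot_le_iso_class_iff)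
    then have "\<not> reaches w upper1 \<or> \<not> reaches w upper2"
      using no_bound_between_lower_and_upper[OF w(2,3)] by blast
    then have "\<not> S \<sqsubseteq>\<^bsub>?L\<^esub> iso_class upper1 \<or> \<not> S \<sqsubseteq>\<^bsub>?L\<^esub> iso_class upper2"
      by (simp add: le w(1) rot_le_iso_class_iff)
    moreover have "iso_class upper1 \<in> ?U" "iso_class upper2 \<in> ?U"
      using upper_bound prograph_word_3_bounds reaches_lower_upper by simp_all
    ultimately show "\<exists>u \<in> ?U. \<not> S \<sqsubseteq>\<^bsub>?L\<^esub> u" by blast
  qed
qed

theorem mainTheorem4:
  shows "\<exists>n\<ge>1. partial_order (rotation_order n) \<and> \<not> lattice (rotation_order n)"
proof (intro exI conjI)
  show "partial_order (rotation_order 3)"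
    using reaches_antisym_3 by (rule partial_order_rotation_order)
  show "\<not> lattice (rotation_order 3)" by (rule not_lattice_rotation_order_3)
qed simp

end
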